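(* For any ${\cal X}_5$ formula $\varphi$ and any consistent sets of explicit literals $H\subseteq T$: (i) $H\models\varphi^T_+$ if and only if $\langle H,T\rangle\models\varphi$; (ii) $H=\!\!|\;\varphi^T_-$ if and only if $\langle H,T\rangle=\!\!|\;\varphi$.
   Context: Fix a set $\mathit{At}$ of atoms. An explicit literal is $p$ or $\sim p$ for $p\in\mathit{At}$; a set of explicit literals is consistent if it never contains both $p$ and $\sim p$. Formulas: $\varphi ::= p\mid\bot\mid\varphi\wedge\varphi\mid\varphi\vee\varphi\mid\varphi\to\varphi\mid\sim\varphi$; abbreviations $\neg\varphi:=\varphi\to\bot$, $\top:=\neg\bot$. Classical satisfaction/falsification of a formula by a consistent set $T$ of explicit literals: $T\not\models\bot$, $T=\!\!|\;\bot$; $T\models p$ iff $p\in T$, $T=\!\!|\;p$ iff $\sim p\in T$; $\wedge$: satisfied iff both satisfied, falsified iff at least one falsified; $\vee$: satisfied iff at least one satisfied, falsified iff both falsified; $T\models\sim\varphi$ iff $T=\!\!|\;\varphi$, $T=\!\!|\;\sim\varphi$ iff $T\models\varphi$; $T\models\varphi\to\psi$ iff $T\not\models\varphi$ or $T\models\psi$, $T=\!\!|\;\varphi\to\psi$ iff $T\models\varphi$ and $T=\!\!|\;\psi$ (hence $T\models\neg\varphi$ iff $T\not\models\varphi$, $T=\!\!|\;\neg\varphi$ iff $T\models\varphi$). ${\cal X}_5$-interpretations are pairs $\langle H,T\rangle$ of consistent sets of explicit literals with $H\subseteq T$, with satisfaction $\models$ and falsification $=\!\!|\;$: $\langle H,T\rangle\not\models\bot$,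 $\langle H,T\rangle=\!\!|\;\bot$; $\models p$ iff $p\in H$, $=\!\!|\;p$ iff $\sim p\in H$; $\wedge,\vee,\sim$ as in the classical clauses above (with $\langle H,T\rangle$ in place of $T$); $\langle H,T\rangle\models\varphi\to\psi$ iff (i) $\langle H,T\rangle\not\models\varphi$ or $\langle H,T\rangle\models\psi$ and (ii) $\langle T,T\rangle\not\models\varphi$ or $\langle T,T\rangle\models\psi$; $\langle H,T\rangle=\!\!|\;\varphi\to\psi$ iff $\langle T,T\rangle\models\varphi$ and $\langle H,T\rangle=\!\!|\;\psi$. Given $T$, the mutually recursive transformations $\varphi^T_+$ and $\varphi^T_-$ are (with the clauses for $\neg\alpha$ taking priority over those for $\to$): $\varphi^T_+=\bot$ if $T\not\models\varphi$; otherwise ($T\models\varphi$): $p^T_+=p$ for an atom $p$; $(\alpha\otimes\beta)^T_+=\alpha^T_+\otimes\beta^T_+$ for $\otimes\in\{\wedge,\vee\}$; $(\alpha\to\beta)^T_+=\neg(\alpha^T_+)\vee\beta^T_+$; $(\neg\alpha)^T_+=\neg(\alpha^T_+)$; $(\sim\alpha)^T_+=\sim(\alpha^T_-)$. $\varphi^T_-=\top$ if $T$ does not falsify $\varphi$; otherwise ($T=\!\!|\;\varphi$): $p^T_-=p$ for an atom $p$; $\bot^T_-=\bot$; $(\alpha\otimes\beta)^T_-=\alpha^T_-\otimes\beta^T_-$ for $\otimes\in\{\wedge,\vee\}$; $(\alpha\to\beta)^T_-=\beta^T_-$; $(\neg\alpha)^T_-=\bot$; $(\sim\alpha)^T_-=\sim(\alpha^T_+)$.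 In $H\models\varphi^T_+$ and $H=\!\!|\;\varphi^T_-$ the classical satisfaction/falsification above is used. *)

theory Defs
  imports Main
begin

text \<open>Formulas over atoms of type 'a. SNeg is strong negation (written ~ in the paper).\<close>
datatype 'a fm = Atom 'a | Bot | Conj "'a fm" "'a fm" | Disj "'a fm" "'a fm"
  | Imp "'a fm" "'a fm" | SNeg "'a fm"

definition Neg :: "'a fm \<Rightarrow> 'a fm" where "Neg \<phi> = Imp \<phi> Bot"
definition Top :: "'a fm" where "Top = Neg Bot"

datatype 'a lit = Pos 'a | NegLit 'a

definition consistent :: "'a lit set \<Rightarrow> bool" where
  "consistent S \<longleftrightarrow> (\<forall>p. \<not> (Pos p \<in> S \<and> NegLit p \<in> S))"

fun csat :: "'a lit set \<Rightarrow> 'a fm \<Rightarrow> bool"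
and cfals :: "'a lit set \<Rightarrow> 'a fm \<Rightarrow> bool" where
  "csat T Bot = False"
| "csat T (Atom p) = (Pos p \<in> T)"
| "csat T (Conj a b) = (csat T a \<and> csat T b)"
| "csat T (Disj a b) = (csat T a \<or> csat T b)"
| "csat T (SNeg a) = cfals T a"
| "csat T (Imp a b) = (\<not> csat T a \<or> csat T b)"
| "cfals T Bot = True"
| "cfals T (Atom p) = (NegLit p \<in> T)"
| "cfals T (Conj a b) = (cfals T a \<or> cfals T b)"
| "cfals T (Disj a b) = (cfals T a \<and> cfals T b)"
| "cfals T (SNeg a) = csat T a"
| "cfals T (Imp a b) = (csat T a \<and> cfals T b)"

fun xsat :: "'a lit set \<Rightarrow> 'a lit set \<Rightarrow> 'a fm \<Rightarrow> bool"
and xfals :: "'a lit set \<Rightarrow> 'a lit set \<Rightarrow> 'a fm \<Rightarrow> bool" where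
  "xsat H T Bot = False"
| "xsat H T (Atom p) = (Pos p \<in> H)"
| "xsat H T (Conj a b) = (xsat H T a \<and> xsat H T b)"
| "xsat H T (Disj a b) = (xsat H T a \<or> xsat H T b)"
| "xsat H T (SNeg a) = xfals H T a"
| "xsat H T (Imp a b) = ((\<not> xsat H T a \<or> xsat H T b) \<and> (\<not> xsat T T a \<or> xsat T T b))"
| "xfals H T Bot = True"
| "xfals H T (Atom p) = (NegLit p \<in> H)"
| "xfals H T (Conj a b) = (xfals H T a \<or> xfals H T b)"
| "xfals H T (Disj a b) = (xfals H T a \<and> xfals H T b)"
| "xfals H T (SNeg a) = xsat H T a"
| "xfals H T (Imp a b) = (xsat T T a \<and> xfals H T b)"

text \<open>The transformations phi^T_+ (tplus) and phi^T_- (tminus).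
  Clauses for Neg a = Imp a Bot take priority over the general Imp clauses.\<close>
fun tplus :: "'a lit set \<Rightarrow> 'a fm \<Rightarrow> 'a fm"
and tminus :: "'a lit set \<Rightarrow> 'a fm \<Rightarrow> 'a fm" where
  "tplus T \<phi> =
    (if \<not> csat T \<phi> then Bot else
     (case \<phi> of
        Atom p \<Rightarrow> Atom p
      | Bot \<Rightarrow> Bot
      | Conj a b \<Rightarrow> Conj (tplus T a) (tplus T b)
      | Disj a b \<Rightarrow> Disj (tplus T a) (tplus T b)
      | Imp a b \<Rightarrow> (if b = Bot then Neg (tplus T a)
                    else Disj (Neg (tplus T a)) (tplus T b))
      | SNeg a \<Rightarrow> SNeg (tminus T a)))"
| "tminus T \<phi> =
    (if \<not> cfals T \<phi> then Top else
     (case \<phi> of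
        Atom p \<Rightarrow> Atom p
      | Bot \<Rightarrow> Bot
      | Conj a b \<Rightarrow> Conj (tminus T a) (tminus T b)
      | Disj a b \<Rightarrow> Disj (tminus T a) (tminus T b)
      | Imp a b \<Rightarrow> (if b = Bot then Bot else tminus T b)
      | SNeg a \<Rightarrow> SNeg (tplus T a)))"

end

theory Submission
  imports Defs
begin

text \<open>On total pairs \<open>\<langle>T,T\<rangle>\<close> the \<open>\<X>\<^sub>5\<close> semantics is classical, and satisfaction and
  falsification persist from \<open>\<langle>H,T\<rangle>\<close> to \<open>\<langle>T,T\<rangle>\<close>. Hence whenever \<open>T\<close> does not satisfy
  (falsify) \<open>\<phi>\<close>, neither does \<open>\<langle>H,T\<rangle>\<close>, matching the default \<open>\<bottom>\<close> (\<open>\<top>\<close>) of the transformation;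
  otherwise the transformation commutes with the connectives, and for an implication
  \<open>\<alpha> \<rightarrow> \<beta>\<close> the second, "there" conjunct of the \<open>\<X>\<^sub>5\<close> clause is already decided by \<open>T\<close>.\<close>

lemma xsat_xfals_total_iff_csat_cfals:
  "(xsat T T \<phi> \<longleftrightarrow> csat T \<phi>) \<and> (xfals T T \<phi> \<longleftrightarrow> cfals T \<phi>)"
  by (induction \<phi>) auto

lemma xsat_xfals_persistent:
  assumes "H \<subseteq> T"
  shows "(xsat H T \<phi> \<longrightarrow> xsat T T \<phi>) \<and> (xfals H T \<phi> \<longrightarrow> xfals T T \<phi>)"
  using assms by (induction \<phi>) auto

lemma csat_cfals_if_xsat_xfals:
  assumes "H \<subseteq> T"
  shows "xsat H T \<phi> \<Longrightarrow> csat T \<phi>" and "xfals H T \<phi> \<Longrightarrow> cfals T \<phi>"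
  using xsat_xfals_persistent[OF assms] xsat_xfals_total_iff_csat_cfals by blast+

lemma csat_tplus_cfals_tminus_iff:
  assumes "H \<subseteq> T"
  shows "(csat H (tplus T \<phi>) \<longleftrightarrow> xsat H T \<phi>) \<and> (cfals H (tminus T \<phi>) \<longleftrightarrow> xfals H T \<phi>)"
proof (induction \<phi>)
  case (Imp a b)
  then show ?case
    using csat_cfals_if_xsat_xfals[OF assms, of "Imp a b"]
      xsat_xfals_total_iff_csat_cfals[of T a] xsat_xfals_total_iff_csat_cfals[of T b]
    by (auto simp: Neg_def Top_def)
qed (use csat_cfals_if_xsat_xfals[OF assms] assms in \<open>auto simp: Top_def Neg_def\<close>)

theorem theorem4:
  fixes \<phi> :: "'a fm" and H T :: "'a lit set"
  assumes "consistent H" and "consistent T" and "H \<subseteq> T"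
  shows "(csat H (tplus T \<phi>) \<longleftrightarrow> xsat H T \<phi>) \<and> (cfals H (tminus T \<phi>) \<longleftrightarrow> xfals H T \<phi>)"
  using csat_tplus_cfals_tminus_iff[OF \<open>H \<subseteq> T\<close>] .

end
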